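(* Let $\Lambda\subset\mathbb{R}^6$ be a lattice and $Q\in\mathrm{SO}(6)$ with $Q\Lambda=\Lambda$ and $Q^N=\mathbb{1}$, and let $\mathcal{P}=\mathbb{Z}_N=\langle\theta\rangle$ act on $\mathbb{R}^6$ by $\theta\mapsto Q$. Assume that for every $k\in\mathbb{Z}$ the fixed subspace $\mathrm{Fix}(Q^k)=\{x\in\mathbb{R}^6: Q^kx=x\}$ has dimension $0$, $2$ or $6$. Let $\mathcal{O}\subseteq\mathcal{P}^2$ be the $\mathcal{N}=2$ sector. Then $\mathcal{O}$ is closed under the action $\ast$ of $\mathrm{SL}(2,\mathbb{Z})$, and in particular under every subgroup of $\mathrm{SL}(2,\mathbb{Z})$. Moreover, all elements of a minimally closed subset of $\mathcal{O}$ fix the same plane, i.e. there is a single two-dimensional subspace $E$ such that every nontrivial component $g$ or $h$ of every element $(g,h)$ of that subset satisfies $\mathrm{Fix}(g)=E$.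
   Context: The action of $V=\begin{pmatrix} a&b\\c&d\end{pmatrix}\in\mathrm{SL}(2,\mathbb{Z})$ on $\mathcal{P}^2$ is $(g,h)\ast V=(g^ah^{-c},g^{-b}h^d)$. The $\mathcal{N}=2$ sector is the set of pairs $(g,h)\in\mathcal{P}^2$ with $(g,h)\neq(1,1)$ for which there is a two-dimensional subspace $E\subset\mathbb{R}^6$ (a fixed plane) such that each of $g,h$ is either the identity or has fixed subspace exactly $E$ ("$g$ and $h$ fix the same plane"). A subset is closed under a group $G$ if it is mapped into itself by every $V\in G$; a closed set is minimally closed if it is nonempty and contains no nonempty proper closed subset. *)

theory Defs
  imports "HOL-Analysis.Analysis"
begin

primrec mpow :: "real^'n^'n \<Rightarrow> nat \<Rightarrow> real^'n^'n" where
  "mpow A 0 = mat 1"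
| "mpow A (Suc k) = A ** mpow A k"

definition is_lattice :: "(real^6) set \<Rightarrow> bool" where
  "is_lattice L \<longleftrightarrow>
     (\<exists>B :: real^6^6. invertible B \<and>
        L = range (\<lambda>z :: int^6. B *v (\<chi> i. real_of_int (z $ i))))"

definition SL2Z :: "(int^2^2) set" where
  "SL2Z = {V. det V = 1}"

definition is_subgroup_SL2Z :: "(int^2^2) set \<Rightarrow> bool" where
  "is_subgroup_SL2Z G \<longleftrightarrow> G \<subseteq> SL2Z \<and> mat 1 \<in> G \<and>
     (\<forall>A\<in>G. \<forall>B\<in>G. A ** B \<in> G) \<and> (\<forall>A\<in>G. \<exists>B\<in>G. A ** B = mat 1)"

(* The point group P = Z_N = <theta>, written additively: theta^k is represented
   by k in {0..<N}; the identity is 0. *)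
definition PG :: "nat \<Rightarrow> int set" where
  "PG N = {0..<int N}"

definition fixsp :: "real^6^6 \<Rightarrow> int \<Rightarrow> (real^6) set" where
  "fixsp Q k = {x. mpow Q (nat k) *v x = x}"

(* (g,h) * V = (g^a h^(-c), g^(-b) h^d), additively in Z_N *)
definition act :: "nat \<Rightarrow> int^2^2 \<Rightarrow> int \<times> int \<Rightarrow> int \<times> int" where
  "act N V p = (let a = V$1$1; b = V$1$2; c = V$2$1; d = V$2$2; g = fst p; h = snd p
                in ((a * g - c * h) mod int N, (- b * g + d * h) mod int N))"

definition fix_plane :: "real^6^6 \<Rightarrow> (real^6) set \<Rightarrow> int \<times> int \<Rightarrow> bool" where
  "fix_plane Q E p \<longleftrightarrow> (fst p \<noteq> 0 \<longrightarrow> fixsp Q (fst p) = E) \<and> (snd p \<noteq> 0 \<longrightarrow> fixsp Q (snd p) = E)"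

definition N2_sector :: "real^6^6 \<Rightarrow> nat \<Rightarrow> (int \<times> int) set" where
  "N2_sector Q N = {p \<in> PG N \<times> PG N. p \<noteq> (0,0) \<and>
      (\<exists>E. subspace E \<and> dim E = 2 \<and> fix_plane Q E p)}"

definition closed_under :: "nat \<Rightarrow> (int^2^2) set \<Rightarrow> (int \<times> int) set \<Rightarrow> bool" where
  "closed_under N G S \<longleftrightarrow> (\<forall>V\<in>G. \<forall>p\<in>S. act N V p \<in> S)"

definition minimally_closed :: "nat \<Rightarrow> (int^2^2) set \<Rightarrow> (int \<times> int) set \<Rightarrow> bool" where
  "minimally_closed N G S \<longleftrightarrow> S \<noteq> {} \<and> closed_under N G S \<and>
     (\<forall>T. T \<subseteq> S \<and> T \<noteq> {} \<and> closed_under N G T \<longrightarrow> T = S)"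

end

theory Submission
  imports Defs
begin

text \<open>If \<open>g\<close> and \<open>h\<close> fix the plane \<open>E\<close>, then so does every \<open>g\<^sup>a h\<^sup>c\<close>. Its fixed subspace
  therefore has dimension at least \<open>2\<close>, and by the dimension hypothesis it is either all of
  \<open>\<real>\<^sup>6\<close>, which forces \<open>g\<^sup>a h\<^sup>c = 1\<close>, or exactly \<open>E\<close>. Since \<open>(g, h) \<ast> V\<close> has components of
  this form, and is not \<open>(1, 1)\<close> because \<open>V\<close> is invertible, the action preserves the
  \<open>N = 2\<close> sector and even each set of pairs fixing a given plane. A minimally closed subset
  meets such a set, so it is contained in it.\<close>

lemma mpow_add: "mpow A (m + n) = mpow A m ** mpow A n"
  by (induction m) (auto simp: matrix_mul_assoc)

lemma mpow_mult_period: "mpow A N = mat 1 \<Longrightarrow> mpow A (N * q) = mat 1"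
  by (induction q) (simp_all add: mpow_add)

lemma mpow_mod_period:
  assumes "mpow A N = mat 1"
  shows "mpow A n = mpow A (n mod N)"
proof -
  have "mpow A n = mpow A (N * (n div N)) ** mpow A (n mod N)"
    by (metis div_mult_mod_eq mult.commute mpow_add)
  then show ?thesis
    by (simp add: mpow_mult_period[OF assms])
qed

lemma mpow_fixes: "A *v x = x \<Longrightarrow> mpow A n *v x = x"
  by (induction n) (simp_all add: matrix_vector_mul_assoc[symmetric])

definition zpow :: "real^'n^'n \<Rightarrow> nat \<Rightarrow> int \<Rightarrow> real^'n^'n" where
  "zpow A N k = mpow A (nat (k mod int N))"

lemma zpow_add:
  assumes "mpow A N = mat 1" "N > 0"
  shows "zpow A N (u + v) = zpow A N u ** zpow A N v"
proof -
  have "int (nat ((u + v) mod int N)) = int ((nat (u mod int N) + nat (v mod int N)) mod N)"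
    using \<open>N > 0\<close> by (simp add: zmod_int mod_add_eq)
  then have "nat ((u + v) mod int N) = (nat (u mod int N) + nat (v mod int N)) mod N"
    by linarith
  then show ?thesis
    unfolding zpow_def by (metis mpow_add mpow_mod_period[OF assms(1)])
qed

lemma zpow_int_mult:
  assumes "mpow A N = mat 1" "N > 0"
  shows "zpow A N (int n * u) = mpow (zpow A N u) n"
proof (induction n)
  case 0
  then show ?case by (simp add: zpow_def)
next
  case (Suc n)
  have "zpow A N (int (Suc n) * u) = zpow A N (u + int n * u)"
    by (simp add: algebra_simps)
  with Suc show ?case
    by (simp add: zpow_add[OF assms])
qed

lemma zpow_mult_fixes:
  assumes "mpow A N = mat 1" "N > 0" and "zpow A N u *v x = x"
  shows "zpow A N (k * u) *v x = x"
proof -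
  define n where "n = nat (k mod int N)"
  have "k * u mod int N = int n * u mod int N"
    using \<open>N > 0\<close> by (simp add: n_def mod_mult_left_eq)
  then have "zpow A N (k * u) = mpow (zpow A N u) n"
    using zpow_int_mult[OF assms(1,2)] by (metis zpow_def)
  then show ?thesis
    using assms(3) by (simp add: mpow_fixes)
qed

lemma zpow_lincomb_fixes:
  assumes "mpow A N = mat 1" "N > 0"
    and "zpow A N g *v x = x" "zpow A N h *v x = x"
  shows "zpow A N (a * g + c * h) *v x = x"
proof -
  have "zpow A N (a * g) *v x = x" "zpow A N (c * h) *v x = x"
    using zpow_mult_fixes[OF assms(1,2)] assms(3,4) by blast+
  then show ?thesis
    by (simp add: zpow_add[OF assms(1,2)] matrix_vector_mul_assoc[symmetric])
qed

lemma subspace_fixed_space: "subspace {x. (A::real^'n^'n) *v x = x}"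
  unfolding subspace_def
  by (auto simp: matrix_vector_right_distrib matrix_vector_mult_scaleR)

lemma fixed_space_full_dim_imp_eq_mat_1:
  fixes A :: "real^'n^'n"
  assumes "dim {x. A *v x = x} = CARD('n)"
  shows "A = mat 1"
proof -
  have "span {x. A *v x = x} = UNIV"
    using assms dim_eq_full[where 'a="real^'n"] by simp
  then have "{x. A *v x = x} = UNIV"
    using span_eq_iff subspace_fixed_space by metis
  then have "\<forall>x. A *v x = mat 1 *v x"
    by auto
  then show ?thesis
    using matrix_eq by blast
qed

lemma fixsp_mod_eq_zpow: "fixsp A (u mod int N) = {x. zpow A N u *v x = x}"
  by (simp add: fixsp_def zpow_def)

lemma fixsp_eq_plane:
  fixes Q :: "real^6^6"
  assumes faithful: "\<forall>k. 0 < k \<and> k < N \<longrightarrow> mpow Q k \<noteq> mat 1"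
    and fixdim: "\<forall>k. dim {x. mpow Q k *v x = x} \<in> {0, 2, 6}"
    and E: "subspace E" "dim E = 2"
    and k: "0 < k" "k < int N"
    and E_fixed: "E \<subseteq> fixsp Q k"
  shows "fixsp Q k = E"
proof -
  have "mpow Q (nat k) \<noteq> mat 1"
    using faithful k by auto
  then have "dim (fixsp Q k) \<noteq> 6"
    using fixed_space_full_dim_imp_eq_mat_1[of "mpow Q (nat k)"] unfolding fixsp_def by auto
  moreover have "dim (fixsp Q k) \<ge> 2"
    using dim_subset[OF E_fixed] E by simp
  moreover have "dim (fixsp Q k) \<in> {0, 2, 6}"
    using fixdim unfolding fixsp_def by blast
  ultimately have "dim (fixsp Q k) \<le> dim E"
    using E by (auto simp del: dim_eq_0)
  then show ?thesis
    using subspace_dim_equal[OF E(1) _ E_fixed] subspace_fixed_space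
    unfolding fixsp_def by blast
qed

lemma fix_plane_lincomb:
  fixes Q :: "real^6^6"
  assumes QN: "mpow Q N = mat 1" and Npos: "N > 0"
    and faithful: "\<forall>k. 0 < k \<and> k < N \<longrightarrow> mpow Q k \<noteq> mat 1"
    and fixdim: "\<forall>k. dim {x. mpow Q k *v x = x} \<in> {0, 2, 6}"
    and E: "subspace E" "dim E = 2"
    and p: "(g, h) \<in> PG N \<times> PG N" "fix_plane Q E (g, h)"
    and nonzero: "(a * g + c * h) mod int N \<noteq> 0"
  shows "fixsp Q ((a * g + c * h) mod int N) = E"
proof (rule fixsp_eq_plane[OF faithful fixdim E])
  have fixes_E: "zpow Q N u *v x = x" if "x \<in> E" "u \<in> {g, h}" for x u
  proof (cases "u = 0")
    case False
    with p \<open>u \<in> {g, h}\<close> have "fixsp Q u = E" "u mod int N = u"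
      by (auto simp: fix_plane_def PG_def)
    with \<open>x \<in> E\<close> show ?thesis
      using fixsp_mod_eq_zpow[of Q u N] by auto
  qed (simp add: zpow_def)
  show "E \<subseteq> fixsp Q ((a * g + c * h) mod int N)"
    using zpow_lincomb_fixes[OF QN Npos fixes_E fixes_E] by (simp add: fixsp_mod_eq_zpow subset_iff)
  have "0 \<le> (a * g + c * h) mod int N" "(a * g + c * h) mod int N < int N"
    using Npos by simp_all
  then show "0 < (a * g + c * h) mod int N" "(a * g + c * h) mod int N < int N"
    using nonzero by simp_all
qed

text \<open>Since \<open>V\<close> is invertible over \<open>\<int>\<close>, the pair \<open>(g, h)\<close> is an integer combination
  of the two components of \<open>(g, h) \<ast> V\<close>.\<close>

lemma act_SL2Z_nonzero:
  assumes V: "V \<in> SL2Z" and p: "p \<in> PG N \<times> PG N" "p \<noteq> (0, 0)"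
  shows "act N V p \<noteq> (0, 0)"
proof
  obtain g h where gh: "p = (g, h)" by force
  define a b c d where "a = V$1$1" "b = V$1$2" "c = V$2$1" "d = V$2$2"
  have det: "a * d - b * c = 1"
    using V unfolding SL2Z_def a_b_c_d_def by (simp add: det_2)
  assume "act N V p = (0, 0)"
  then have "int N dvd a * g - c * h" "int N dvd - b * g + d * h"
    unfolding act_def Let_def a_b_c_d_def gh by (auto simp: mod_eq_0_iff_dvd)
  then have "int N dvd d * (a * g - c * h) + c * (- b * g + d * h)"
    "int N dvd b * (a * g - c * h) + a * (- b * g + d * h)"
    by simp_all
  moreover have "d * (a * g - c * h) + c * (- b * g + d * h) = (a * d - b * c) * g"
    "b * (a * g - c * h) + a * (- b * g + d * h) = (a * d - b * c) * h"
    by (simp_all add: algebra_simps)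
  ultimately have "int N dvd g" "int N dvd h"
    using det by simp_all
  with p show False
    unfolding gh by (auto simp: PG_def zdvd_not_zless order_le_less)
qed

lemma act_SL2Z_fix_plane:
  fixes Q :: "real^6^6"
  assumes QN: "mpow Q N = mat 1" and Npos: "N > 0"
    and faithful: "\<forall>k. 0 < k \<and> k < N \<longrightarrow> mpow Q k \<noteq> mat 1"
    and fixdim: "\<forall>k. dim {x. mpow Q k *v x = x} \<in> {0, 2, 6}"
    and E: "subspace E" "dim E = 2"
    and p: "p \<in> PG N \<times> PG N" "fix_plane Q E p"
  shows "fix_plane Q E (act N V p)"
proof -
  obtain g h where gh: "p = (g, h)" by force
  note lincomb = fix_plane_lincomb[OF QN Npos faithful fixdim E p[unfolded gh]]
  have act: "act N V p = ((V$1$1 * g + (- V$2$1) * h) mod int N,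
                          ((- V$1$2) * g + V$2$2 * h) mod int N)"
    by (simp add: act_def Let_def gh)
  show ?thesis
    unfolding fix_plane_def act fst_conv snd_conv using lincomb by blast
qed

lemma act_PG: "N > 0 \<Longrightarrow> act N V p \<in> PG N \<times> PG N"
  by (simp add: act_def Let_def PG_def)

lemma closed_under_subset: "G \<subseteq> H \<Longrightarrow> closed_under N H S \<Longrightarrow> closed_under N G S"
  unfolding closed_under_def by blast

lemma minimally_closed_invariant:
  assumes min: "minimally_closed N G S" and "p\<^sub>0 \<in> S" "P p\<^sub>0"
    and invariant: "\<And>V p. V \<in> G \<Longrightarrow> p \<in> S \<Longrightarrow> P p \<Longrightarrow> P (act N V p)"
  shows "\<forall>p\<in>S. P p"
proof -
  have "closed_under N G S"
    using min by (simp add: minimally_closed_def)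
  then have "closed_under N G {p \<in> S. P p}"
    using invariant by (auto simp: closed_under_def)
  moreover have "{p \<in> S. P p} \<subseteq> S" "{p \<in> S. P p} \<noteq> {}"
    using \<open>p\<^sub>0 \<in> S\<close> \<open>P p\<^sub>0\<close> by blast+
  ultimately have "{p \<in> S. P p} = S"
    using min unfolding minimally_closed_def by (elim conjE allE impE) auto
  then show ?thesis by blast
qed

lemma N2_sector_closed_SL2Z:
  fixes Q :: "real^6^6"
  assumes QN: "mpow Q N = mat 1" and Npos: "N > 0"
    and faithful: "\<forall>k. 0 < k \<and> k < N \<longrightarrow> mpow Q k \<noteq> mat 1"
    and fixdim: "\<forall>k. dim {x. mpow Q k *v x = x} \<in> {0, 2, 6}"
  shows "closed_under N SL2Z (N2_sector Q N)"
  unfolding closed_under_def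
proof (intro ballI)
  fix V p
  assume "V \<in> SL2Z" "p \<in> N2_sector Q N"
  then obtain E where E: "subspace E" "dim E = 2" "fix_plane Q E p"
    and p: "p \<in> PG N \<times> PG N" "p \<noteq> (0, 0)"
    unfolding N2_sector_def by blast
  have "fix_plane Q E (act N V p)"
    using act_SL2Z_fix_plane[OF QN Npos faithful fixdim E(1,2) p(1) E(3)] .
  then show "act N V p \<in> N2_sector Q N"
    using act_PG[OF Npos] act_SL2Z_nonzero[OF \<open>V \<in> SL2Z\<close> p] E(1,2)
    unfolding N2_sector_def by blast
qed

lemma minimally_closed_N2_sector_fix_plane:
  fixes Q :: "real^6^6"
  assumes QN: "mpow Q N = mat 1" and Npos: "N > 0"
    and faithful: "\<forall>k. 0 < k \<and> k < N \<longrightarrow> mpow Q k \<noteq> mat 1"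
    and fixdim: "\<forall>k. dim {x. mpow Q k *v x = x} \<in> {0, 2, 6}"
    and S: "S \<subseteq> N2_sector Q N" and min: "minimally_closed N G S"
  shows "\<exists>E. subspace E \<and> dim E = 2 \<and> (\<forall>p\<in>S. fix_plane Q E p)"
proof -
  obtain p\<^sub>0 where "p\<^sub>0 \<in> S"
    using min unfolding minimally_closed_def by blast
  then obtain E where E: "subspace E" "dim E = 2" "fix_plane Q E p\<^sub>0"
    using S unfolding N2_sector_def by blast
  have "fix_plane Q E (act N V p)" if "p \<in> S" "fix_plane Q E p" for V p
    using act_SL2Z_fix_plane[OF QN Npos faithful fixdim E(1,2)] S that
    unfolding N2_sector_def by blast
  then have "\<forall>p\<in>S. fix_plane Q E p"
    using minimally_closed_invariant[OF min \<open>p\<^sub>0 \<in> S\<close>, of "fix_plane Q E"] E(3) by blast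
  with E show ?thesis by blast
qed

theorem theorem2p9:
  fixes L :: "(real^6) set" and Q :: "real^6^6" and N :: nat
  assumes lattice: "is_lattice L"
    and SO6: "orthogonal_matrix Q" "det Q = 1"
    and QL: "(\<lambda>x. Q *v x) ` L = L"
    and Npos: "N > 0"
    and QN: "mpow Q N = mat 1"
    and faithful: "\<forall>k. 0 < k \<and> k < N \<longrightarrow> mpow Q k \<noteq> mat 1"
    and fixdim: "\<forall>k. dim {x. mpow Q k *v x = x} \<in> {0, 2, 6}"
  shows "closed_under N SL2Z (N2_sector Q N)
       \<and> (\<forall>G. is_subgroup_SL2Z G \<longrightarrow> closed_under N G (N2_sector Q N))
       \<and> (\<forall>G S. is_subgroup_SL2Z G \<and> S \<subseteq> N2_sector Q N \<and> minimally_closed N G S \<longrightarrow>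
            (\<exists>E. subspace E \<and> dim E = 2 \<and> (\<forall>p\<in>S. fix_plane Q E p)))"
proof -
  have "closed_under N SL2Z (N2_sector Q N)"
    using N2_sector_closed_SL2Z[OF QN Npos faithful fixdim] .
  then show ?thesis
    using minimally_closed_N2_sector_fix_plane[OF QN Npos faithful fixdim]
      closed_under_subset unfolding is_subgroup_SL2Z_def by blast
qed

end
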